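(* Let $G$ be a connected graph, $c\in V(G)$, and run the scan procedure at $c$ (with any processing order). If $e=cu_1$ and $f=cu_2$ are edges incident to $c$ with $(e,f)\in\beta_c$, then it is not the case that $e$ and $f$ span a unique square which is chordless and has a unique top vertex.
   Context: All graphs are finite, simple, undirected; $N(x)$ is the open neighborhood of $x$. For distinct edges $e=vu$, $f=vw$ sharing the vertex $v$, a square spanned by $e$ and $f$ is a 4-cycle $vuxw$ with $x\ne v$ adjacent to both $u$ and $w$; $x$ is its top vertex. The square is chordless if it is an induced 4-cycle, i.e. $uw\notin E$ and $vx\notin E$. The edges $e,f$ span a unique square if $|N(u)\cap N(w)|=2$ (exactly one top vertex exists). A top vertex $x$ is unique if $|N(x)\cap N(v)|=2$. Scan procedure at $c$: the vertices of $N(c)$ are called primal, and edges incident to $c$ primal edges. Maintain two sets $I$ (incidence list) and $A$ (absence list) of unordered pairs of primal edges, both initially empty, and for every non-primal vertex $w\ne c$ a record of at most two "recorded primal neighbors" (first and second), initially none. Process the neighbors $u$ of $c$ one by one in an arbitrary order, and for each such $u$ process its neighbors $w\neq c$ in an arbitrary order: (1) if $w\in N(c)$, add $\{cu,cw\}$ to $A$; (2) else, if $w$ has no recorded primal neighbor, record $u$ as its first primal neighbor; (3) else, if $w$ has exactly one recorded primal neighbor $v$, record $u$ as its second primal neighbor, and if $\{cu,cv\}\notin I$ add $\{cu,cv\}$ to $I$, otherwise add $\{cu,cv\}$ to $A$; (4) else ($w$ has recorded first and second primal neighbors $v_1,v_2$) add $\{cv_1,cv_2\},\{cv_1,cu\},\{cv_2,cu\}$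 to $A$ (the record is not changed). After the procedure, $\alpha_c$ is the symmetric relation on primal edges consisting of the pairs in $I$, $\beta_c$ the symmetric relation consisting of the pairs in $A$, and $\overline{\alpha}_c$ the set of pairs of primal edges not in $I$. *)

theory Defs
  imports Main
begin

definition simple_graph :: "'a set \<Rightarrow> ('a \<Rightarrow> 'a \<Rightarrow> bool) \<Rightarrow> bool" where
  "simple_graph V E \<longleftrightarrow> finite V \<and> (\<forall>x y. E x y \<longrightarrow> E y x) \<and> (\<forall>x. \<not> E x x)
     \<and> (\<forall>x y. E x y \<longrightarrow> x \<in> V \<and> y \<in> V)"

definition connected_graph :: "'a set \<Rightarrow> ('a \<Rightarrow> 'a \<Rightarrow> bool) \<Rightarrow> bool" where
  "connected_graph V E \<longleftrightarrow> (\<forall>x\<in>V. \<forall>y\<in>V. E\<^sup>*\<^sup>* x y)"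

definition nbh :: "'a set \<Rightarrow> ('a \<Rightarrow> 'a \<Rightarrow> bool) \<Rightarrow> 'a \<Rightarrow> 'a set" where
  "nbh V E x = {y \<in> V. E x y}"

text \<open>Edges are 2-element sets; a pair of primal edges is a set of two edges.
  State of the scan: (I, A, rec), where rec w is the list of recorded primal neighbours
  (at most two, in recording order).\<close>
type_synonym 'a scan_state = "'a set set set \<times> 'a set set set \<times> ('a \<Rightarrow> 'a list)"

fun scan_step :: "('a \<Rightarrow> 'a \<Rightarrow> bool) \<Rightarrow> 'a \<Rightarrow> 'a scan_state \<Rightarrow> 'a \<times> 'a \<Rightarrow> 'a scan_state" where
  "scan_step E c (I, A, r) (u, w) =
    (if E c w then (I, A \<union> {{{c,u},{c,w}}}, r)
     else (case r w of
        [] \<Rightarrow> (I, A, r(w := [u]))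
      | [v] \<Rightarrow> (if {{c,u},{c,v}} \<notin> I then (I \<union> {{{c,u},{c,v}}}, A, r(w := [v,u]))
               else (I, A \<union> {{{c,u},{c,v}}}, r(w := [v,u])))
      | (v1 # v2 # _) \<Rightarrow> (I, A \<union> {{{c,v1},{c,v2}}, {{c,v1},{c,u}}, {{c,v2},{c,u}}}, r)))"

text \<open>Run the scan at c: us is the processing order of N(c), ws u the processing order
  of the neighbours w \<noteq> c of u.\<close>
definition scan :: "('a \<Rightarrow> 'a \<Rightarrow> bool) \<Rightarrow> 'a \<Rightarrow> 'a list \<Rightarrow> ('a \<Rightarrow> 'a list) \<Rightarrow> 'a scan_state" where
  "scan E c us ws = foldl (scan_step E c) ({}, {}, (\<lambda>_. []))
      (concat (map (\<lambda>u. map (\<lambda>w. (u, w)) (ws u)) us))"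

definition valid_order :: "'a set \<Rightarrow> ('a \<Rightarrow> 'a \<Rightarrow> bool) \<Rightarrow> 'a \<Rightarrow> 'a list \<Rightarrow> ('a \<Rightarrow> 'a list) \<Rightarrow> bool" where
  "valid_order V E c us ws \<longleftrightarrow> distinct us \<and> set us = nbh V E c \<and>
     (\<forall>u\<in>set us. distinct (ws u) \<and> set (ws u) = nbh V E u - {c})"

text \<open>beta_c: the pairs recorded in the absence list A.\<close>
definition beta :: "('a \<Rightarrow> 'a \<Rightarrow> bool) \<Rightarrow> 'a \<Rightarrow> 'a list \<Rightarrow> ('a \<Rightarrow> 'a list) \<Rightarrow> 'a set set set" where
  "beta E c us ws = fst (snd (scan E c us ws))"

definition top_vertex :: "('a \<Rightarrow> 'a \<Rightarrow> bool) \<Rightarrow> 'a \<Rightarrow> 'a \<Rightarrow> 'a \<Rightarrow> 'a \<Rightarrow> bool" where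
  "top_vertex E v u w x \<longleftrightarrow> u \<noteq> w \<and> E v u \<and> E v w \<and> x \<noteq> v \<and> E x u \<and> E x w"

text \<open>vu, vw span a unique square (|N(u) \<inter> N(w)| = 2), it is chordless, and its top vertex
  x is unique (|N(x) \<inter> N(v)| = 2).\<close>
definition unique_chordless_square_unique_top ::
  "'a set \<Rightarrow> ('a \<Rightarrow> 'a \<Rightarrow> bool) \<Rightarrow> 'a \<Rightarrow> 'a \<Rightarrow> 'a \<Rightarrow> bool" where
  "unique_chordless_square_unique_top V E v u w \<longleftrightarrow>
     card (nbh V E u \<inter> nbh V E w) = 2 \<and>
     (\<exists>x. top_vertex E v u w x \<and> \<not> E u w \<and> \<not> E v x \<and>
          card (nbh V E x \<inter> nbh V E v) = 2)"

end

theory Submission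
  imports Defs
begin

text \<open>Let \<open>x\<close> be the unique top vertex. A pair of primal edges enters the absence list
  only if their endpoints are adjacent (case 1) or have a common non-primal neighbour \<open>w\<close>
  (cases 3 and 4). For the pair \<open>{cu\<^sub>1, cu\<^sub>2}\<close>, chordlessness rules out
  case 1, and uniqueness of the square forces \<open>w = x\<close>. Case 4 would give \<open>x\<close> three primal
  neighbours, contradicting uniqueness of the top vertex; case 3 would need the pair to be
  in the incidence list already, which only happens when \<open>x\<close> received its second record,
  so \<open>x\<close> would now be recorded for the third time rather than the second.\<close>

lemma card_eq_2_doubleton:
  assumes "card B = 2" "a \<in> B" "b \<in> B" "a \<noteq> b"
  shows "B = {a, b}"
  using assms by (auto simp: card_2_iff)

lemma distinct_concat_pairs:
  "distinct us \<Longrightarrow> \<forall>u\<in>set us. distinct (ws u) \<Longrightarrow>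
    distinct (concat (map (\<lambda>u. map (\<lambda>w. (u, w)) (ws u)) us))"
  by (induction us) (auto simp: distinct_map inj_on_def)

locale isolated_square =
  fixes E :: "'a \<Rightarrow> 'a \<Rightarrow> bool" and c u1 u2 x :: 'a
  assumes E_sym: "E a b \<Longrightarrow> E b a"
    and E_irrefl: "\<not> E a a"
    and adj_c: "E c u1" "E c u2"
    and u_distinct: "u1 \<noteq> u2"
    and chordless: "\<not> E u1 u2"
    and unique_square: "E u1 w \<Longrightarrow> E u2 w \<Longrightarrow> w \<noteq> c \<Longrightarrow> w = x"
    and unique_top: "E c v \<Longrightarrow> E x v \<Longrightarrow> v = u1 \<or> v = u2"
begin

abbreviation square_pair :: "'a set set" where
  "square_pair \<equiv> {{c, u1}, {c, u2}}"

lemma square_pair_endpoints: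
  assumes "E c a" "E c b" "{{c, a}, {c, b}} = square_pair"
  shows "{a, b} = {u1, u2}"
proof -
  have "a \<noteq> c" "b \<noteq> c" "u1 \<noteq> c" "u2 \<noteq> c"
    using assms(1,2) adj_c E_irrefl by metis+
  then show ?thesis
    using assms(3) by (auto simp: doubleton_eq_iff)
qed

lemma square_pair_common_nbr:
  assumes "E c a" "E c b" "E a w" "E b w" "w \<noteq> c" "{{c, a}, {c, b}} = square_pair"
  shows "w = x"
proof -
  have "{a, b} = {u1, u2}"
    using square_pair_endpoints assms(1,2,6) .
  then have "E u1 w" "E u2 w"
    using assms(3,4) by (auto simp: doubleton_eq_iff)
  then show ?thesis
    using unique_square assms(5) by blast
qed

lemma square_pair_not_adjacent:
  assumes "E c a" "E c b" "E a b"
  shows "{{c, a}, {c, b}} \<noteq> square_pair"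
proof
  assume "{{c, a}, {c, b}} = square_pair"
  then have "{a, b} = {u1, u2}"
    using square_pair_endpoints assms(1,2) by blast
  then show False
    using assms(3) chordless E_sym by (auto simp: doubleton_eq_iff)
qed

lemma square_pair_not_in_triple:
  assumes "E c a" "E c b" "E c d" "E a w" "E b w" "E d w" "w \<noteq> c" "distinct [a, b, d]"
  shows "square_pair \<notin> {{{c, a}, {c, b}}, {{c, a}, {c, d}}, {{c, b}, {c, d}}}"
proof
  assume "square_pair \<in> {{{c, a}, {c, b}}, {{c, a}, {c, d}}, {{c, b}, {c, d}}}"
  then have "w = x"
    using square_pair_common_nbr assms(1-7) by (metis empty_iff insert_iff)
  then have "a \<in> {u1, u2}" "b \<in> {u1, u2}" "d \<in> {u1, u2}"
    using unique_top assms(1-6) E_sym by blast+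
  then show False
    using assms(8) by auto
qed

text \<open>\<open>S\<close> is the set of pairs \<open>(u, w)\<close> processed so far.\<close>

definition records_ok :: "('a \<times> 'a) set \<Rightarrow> ('a \<Rightarrow> 'a list) \<Rightarrow> bool" where
  "records_ok S r \<longleftrightarrow> (\<forall>w. distinct (r w) \<and> (\<forall>v\<in>set (r w). (v, w) \<in> S \<and> E c v \<and> E v w))"

definition scan_invariant :: "('a \<times> 'a) set \<Rightarrow> 'a scan_state \<Rightarrow> bool" where
  "scan_invariant S st \<longleftrightarrow> (case st of (I, A, r) \<Rightarrow>
     records_ok S r \<and> (square_pair \<in> I \<longrightarrow> 2 \<le> length (r x)) \<and> square_pair \<notin> A)"

lemma records_ok_insert:
  "records_ok S r \<Longrightarrow> records_ok (insert p S) r"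
  by (auto simp: records_ok_def)

lemma records_ok_record:
  assumes "records_ok S r" "(u, w) \<notin> S" "E c u" "E u w"
  shows "records_ok (insert (u, w) S) (r(w := r w @ [u]))"
  using assms by (auto simp: records_ok_def)

lemma square_pair_not_third_record:
  assumes "records_ok S r" "(u, w) \<notin> S" "E c u" "E u w" "w \<noteq> c"
    and "r w = v1 # v2 # rest"
  shows "square_pair \<notin> {{{c, v1}, {c, v2}}, {{c, v1}, {c, u}}, {{c, v2}, {c, u}}}"
proof -
  have "u \<notin> set (r w)" "distinct (r w)"
    using assms(1,2) by (auto simp: records_ok_def)
  then have "distinct [v1, v2, u]"
    using assms(6) by auto
  moreover have "\<forall>v\<in>set (r w). E c v \<and> E v w"
    using assms(1) by (simp add: records_ok_def)
  then have "E c v1" "E v1 w" "E c v2" "E v2 w"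
    using assms(6) by simp_all
  ultimately show ?thesis
    using square_pair_not_in_triple[of v1 v2 u w] assms(3-5) by simp
qed

lemma scan_step_invariant:
  assumes inv: "scan_invariant S (I, A, r)" and new: "(u, w) \<notin> S"
    and edges: "E c u" "E u w" "w \<noteq> c"
  shows "scan_invariant (insert (u, w) S) (scan_step E c (I, A, r) (u, w))"
proof -
  from inv have rec: "records_ok S r" and top: "square_pair \<in> I \<Longrightarrow> 2 \<le> length (r x)"
    and A: "square_pair \<notin> A"
    by (simp_all add: scan_invariant_def)
  have recorded: "E c v" "E v w" if "v \<in> set (r w)" for v
    using rec that by (auto simp: records_ok_def)
  have rec_ins: "records_ok (insert (u, w) S) r"
    using rec by (rule records_ok_insert)
  have rec_app: "records_ok (insert (u, w) S) (r(w := r w @ [u]))"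
    using records_ok_record rec new edges(1,2) .
  consider (primal) "E c w" | (first) "\<not> E c w" "r w = []"
    | (second) v where "\<not> E c w" "r w = [v]"
    | (third) v1 v2 rest where "\<not> E c w" "r w = v1 # v2 # rest"
    by (metis list.exhaust)
  then show ?thesis
  proof cases
    case primal
    then have "{{c, u}, {c, w}} \<noteq> square_pair"
      using square_pair_not_adjacent edges by blast
    then show ?thesis
      using primal rec_ins top A by (auto simp: scan_invariant_def)
  next
    case first
    then show ?thesis
      using rec_app top A by (auto simp: scan_invariant_def)
  next
    case (second v)
    have pair_top: "w = x" if "{{c, u}, {c, v}} = square_pair"
      using square_pair_common_nbr[OF edges(1) _ edges(2) _ edges(3) that] recorded second
      by simp
    show ?thesis
    proof (cases "{{c, u}, {c, v}} \<in> I")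
      case False
      then show ?thesis
        using second rec_app top A pair_top by (auto simp: scan_invariant_def)
    next
      case True
      then have "{{c, u}, {c, v}} \<noteq> square_pair"
        using pair_top top second by force
      then show ?thesis
        using second True rec_app top A by (auto simp: scan_invariant_def)
    qed
  next
    case (third v1 v2 rest)
    then have "square_pair \<notin> {{{c, v1}, {c, v2}}, {{c, v1}, {c, u}}, {{c, v2}, {c, u}}}"
      using square_pair_not_third_record[OF rec new edges] by simp
    then show ?thesis
      using third rec_ins top A by (auto simp: scan_invariant_def)
  qed
qed

lemma scan_invariant_foldl:
  assumes "distinct L" "\<forall>(u, w)\<in>set L. E c u \<and> E u w \<and> w \<noteq> c"
  shows "scan_invariant (set L) (foldl (scan_step E c) ({}, {}, \<lambda>_. []) L)"
  using assms
proof (induction L rule: rev_induct)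
  case Nil
  show ?case
    by (simp add: scan_invariant_def records_ok_def)
next
  case (snoc p L)
  obtain I A r where st: "foldl (scan_step E c) ({}, {}, \<lambda>_. []) L = (I, A, r)"
    by (metis prod_cases3)
  obtain u w where p: "p = (u, w)"
    by fastforce
  have "scan_invariant (set L) (I, A, r)"
    using snoc st by simp
  then have "scan_invariant (insert (u, w) (set L)) (scan_step E c (I, A, r) (u, w))"
    using snoc.prems p by (intro scan_step_invariant) auto
  then show ?case
    using st p by simp
qed

lemma square_pair_notin_beta:
  assumes "valid_order V E c us ws"
  shows "square_pair \<notin> beta E c us ws"
proof -
  define L where "L = concat (map (\<lambda>u. map (\<lambda>w. (u, w)) (ws u)) us)"
  have "distinct L"
    using assms distinct_concat_pairs unfolding L_def valid_order_def by blast
  moreover have "\<forall>(u, w)\<in>set L. E c u \<and> E u w \<and> w \<noteq> c"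
    using assms unfolding L_def valid_order_def by (auto simp: nbh_def)
  ultimately have "scan_invariant (set L) (scan E c us ws)"
    unfolding scan_def L_def[symmetric] by (rule scan_invariant_foldl)
  then show ?thesis
    unfolding beta_def scan_invariant_def by (auto split: prod.splits)
qed

end

lemma unique_chordless_square_isolated:
  assumes "simple_graph V E" "unique_chordless_square_unique_top V E c u1 u2"
  shows "\<exists>x. isolated_square E c u1 u2 x"
proof -
  have sym: "E a b \<Longrightarrow> E b a" and irrefl: "\<not> E a a"
    and inV: "E a b \<Longrightarrow> a \<in> V \<and> b \<in> V" for a b
    using assms(1) by (auto simp: simple_graph_def)
  obtain x where x: "top_vertex E c u1 u2 x" "\<not> E u1 u2"
    and card_u: "card (nbh V E u1 \<inter> nbh V E u2) = 2"
    and card_x: "card (nbh V E x \<inter> nbh V E c) = 2"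
    using assms(2) by (auto simp: unique_chordless_square_unique_top_def)
  have edges: "u1 \<noteq> u2" "E c u1" "E c u2" "x \<noteq> c" "E x u1" "E x u2"
    using x(1) by (auto simp: top_vertex_def)
  have "nbh V E u1 \<inter> nbh V E u2 = {c, x}"
    using card_eq_2_doubleton[OF card_u] edges sym inV by (auto simp: nbh_def)
  moreover have "nbh V E x \<inter> nbh V E c = {u1, u2}"
    using card_eq_2_doubleton[OF card_x] edges sym inV by (auto simp: nbh_def)
  ultimately have "isolated_square E c u1 u2 x"
    using edges x(2) sym irrefl inV by unfold_locales (auto simp: nbh_def)
  then show ?thesis ..
qed

theorem mainTheorem3:
  fixes V :: "'a set" and E :: "'a \<Rightarrow> 'a \<Rightarrow> bool" and c u1 u2 :: 'a
    and us :: "'a list" and ws :: "'a \<Rightarrow> 'a list"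
  assumes "simple_graph V E" and "connected_graph V E" and "c \<in> V"
    and "valid_order V E c us ws"
    and "E c u1" and "E c u2"
    and "{{c,u1},{c,u2}} \<in> beta E c us ws"
  shows "\<not> unique_chordless_square_unique_top V E c u1 u2"
proof
  assume "unique_chordless_square_unique_top V E c u1 u2"
  with assms(1) obtain x where "isolated_square E c u1 u2 x"
    by (blast dest: unique_chordless_square_isolated)
  then have "{{c,u1},{c,u2}} \<notin> beta E c us ws"
    using assms(4) by (rule isolated_square.square_pair_notin_beta)
  then show False
    using assms(7) by contradiction
qed

end
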